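(* In the game $\mathcal{B}_0(120,6)$, no pure strategy is weakly dominated by another pure strategy.
   Context: Fix integers $N\ge1$, $K\ge2$ and a real number $\alpha$. The Colonel Blotto game $\mathcal{B}_\alpha(N,K)$ is the two-player simultaneous-move game with players $A,B$, each with pure strategy set $S=\{s\in\{0,1,\ldots,N\}^K:\sum_{k=1}^K s_k=N\}$, in which the payoff of player $i$ at the pure profile $(s^i,s^{-i})$ is $\pi^i(s^i,s^{-i})=\sum_{k=1}^K\big(\mathbf 1[s^i_k>s^{-i}_k]+\tfrac{\alpha}{2}\mathbf 1[s^i_k=s^{-i}_k]\big)$. A pure strategy $s\in S$ is weakly dominated by a pure strategy $\hat s\in S$ if $\pi^i(s,t)\le\pi^i(\hat s,t)$ for all $t\in S$ and $\pi^i(s,t)<\pi^i(\hat s,t)$ for at least one $t\in S$. *)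

theory Defs
  imports Complex_Main
begin

definition blotto_strategies :: "nat \<Rightarrow> nat \<Rightarrow> (nat \<Rightarrow> nat) set" where
  "blotto_strategies N K =
     {s. (\<forall>k. K \<le> k \<longrightarrow> s k = 0) \<and> (\<forall>k<K. s k \<le> N) \<and> (\<Sum>k<K. s k) = N}"

definition blotto_payoff :: "real \<Rightarrow> nat \<Rightarrow> (nat \<Rightarrow> nat) \<Rightarrow> (nat \<Rightarrow> nat) \<Rightarrow> real" where
  "blotto_payoff \<alpha> K s t =
     (\<Sum>k<K. (if s k > t k then 1 else 0) + (\<alpha> / 2) * (if s k = t k then 1 else 0))"

definition weakly_dominated_by ::
    "real \<Rightarrow> nat \<Rightarrow> nat \<Rightarrow> (nat \<Rightarrow> nat) \<Rightarrow> (nat \<Rightarrow> nat) \<Rightarrow> bool" where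
  "weakly_dominated_by \<alpha> N K s s' \<longleftrightarrow>
     (\<forall>t\<in>blotto_strategies N K. blotto_payoff \<alpha> K s t \<le> blotto_payoff \<alpha> K s' t) \<and>
     (\<exists>t\<in>blotto_strategies N K. blotto_payoff \<alpha> K s t < blotto_payoff \<alpha> K s' t)"

end

theory Submission
  imports Defs
begin

text \<open>Use \<open>s'\<close> itself as the test opponent. Against \<open>s'\<close>, the strategy \<open>s'\<close> ties on
  every battlefield and scores \<open>K\<alpha>/2 \<le> 0\<close>, while any other allocation \<open>s\<close> of the same
  total exceeds \<open>s'\<close> on some battlefield, wins it, and scores strictly more.\<close>

lemma blotto_strategy_exceeds_somewhere:
  assumes s: "s \<in> blotto_strategies N K" and s': "s' \<in> blotto_strategies N K"
    and "s \<noteq> s'"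
  shows "\<exists>k<K. s' k < s k"
proof (rule ccontr)
  assume "\<not> (\<exists>k<K. s' k < s k)"
  then have le: "\<And>k. k \<in> {..<K} \<Longrightarrow> s k \<le> s' k" using not_less by blast
  have "(\<Sum>k<K. s k) = (\<Sum>k<K. s' k)" using s s' by (simp add: blotto_strategies_def)
  then have "s k = s' k" if "k < K" for k
    using sum_mono_inv[of s "{..<K}" s', OF _ le] that by simp
  moreover have "s k = s' k" if "K \<le> k" for k
    using s s' that by (simp add: blotto_strategies_def)
  ultimately have "s = s'" by (metis ext not_le)
  with \<open>s \<noteq> s'\<close> show False by contradiction
qed

lemma blotto_payoff_self_less:
  assumes "\<alpha> \<le> 0" and "s' k < s k" and "k < K"
  shows "blotto_payoff \<alpha> K s' s' < blotto_payoff \<alpha> K s s'"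
proof -
  have "blotto_payoff \<alpha> K s' s' = (\<Sum>j<K. \<alpha> / 2)" by (simp add: blotto_payoff_def)
  also have "\<dots> < blotto_payoff \<alpha> K s s'"
    unfolding blotto_payoff_def
    by (rule sum_strict_mono_ex1) (use assms in auto)
  finally show ?thesis .
qed

lemma not_weakly_dominated_by_if_nonpos_tie:
  assumes "\<alpha> \<le> 0" and s: "s \<in> blotto_strategies N K" and s': "s' \<in> blotto_strategies N K"
  shows "\<not> weakly_dominated_by \<alpha> N K s s'"
proof (cases "s = s'")
  case False
  then obtain k where "k < K" "s' k < s k"
    using blotto_strategy_exceeds_somewhere[OF s s'] by blast
  then have "\<not> blotto_payoff \<alpha> K s s' \<le> blotto_payoff \<alpha> K s' s'"
    using blotto_payoff_self_less \<open>\<alpha> \<le> 0\<close> by (simp add: not_le)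
  with s' show ?thesis by (auto simp: weakly_dominated_by_def)
qed (simp add: weakly_dominated_by_def)

theorem corollary3:
  "\<forall>s\<in>blotto_strategies 120 6. \<forall>s'\<in>blotto_strategies 120 6.
     \<not> weakly_dominated_by 0 120 6 s s'"
  using not_weakly_dominated_by_if_nonpos_tie[of 0] by simp

end
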